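(* Let $p$ be a prime and let $G$ be a nontrivial finite abelian $p$-group. Then $n_G=\exp(G)$ if and only if $G$ is either cyclic or elementary abelian.
   Context: For a finite group $G$ and $x\in G$, let $I_{\mathcal C}(x)=\{y\in G : \langle x,y\rangle \text{ is cyclic}\}$. For a nontrivial finite group $G$, $n_G=\max\{|I_{\mathcal C}(x)| : x\in G\setminus\{1\}\}$. $\exp(G)$ denotes the exponent of $G$. *)

theory Defs
  imports "HOL-Algebra.Algebra"
begin

definition cyclic_partners :: "('a, 'b) monoid_scheme \<Rightarrow> 'a \<Rightarrow> 'a set" where
  "cyclic_partners G x = {y \<in> carrier G. cyclic_group (subgroup_generated G {x, y})}"

definition n_cyc :: "('a, 'b) monoid_scheme \<Rightarrow> nat" where
  "n_cyc G = Max ((\<lambda>x. card (cyclic_partners G x)) ` (carrier G - {\<one>\<^bsub>G\<^esub>}))"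

definition group_exponent :: "('a, 'b) monoid_scheme \<Rightarrow> nat" where
  "group_exponent G = (LEAST n::nat. 0 < n \<and> (\<forall>g \<in> carrier G. g [^]\<^bsub>G\<^esub> n = \<one>\<^bsub>G\<^esub>))"

definition elementary_abelian :: "nat \<Rightarrow> ('a, 'b) monoid_scheme \<Rightarrow> bool" where
  "elementary_abelian p G \<longleftrightarrow> comm_group G \<and> (\<forall>g \<in> carrier G. g [^]\<^bsub>G\<^esub> p = \<one>\<^bsub>G\<^esub>)"

end

theory Submission
  imports Defs "HOL-Computational_Algebra.Primes"
begin

(* If G is cyclic, any two elements generate a subgroup of the cyclic group G, hence a cyclic one,
   so I_C(x) = G and n_G = |G| = exp G. An element x of maximal order has I_C(x) = <x>, because a
   cyclic subgroup containing x cannot be larger than <x>; in the elementary abelian case this gives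
   n_G = p = exp G. Otherwise take c of maximal order p^m = exp G, where m >= 2, and z of order p
   outside <c>. Then x = c^(p^(m-1)) lies in <c> and in <cz>, since (cz)^(p^(m-1)) = x, so I_C(x)
   contains <c> and cz, and n_G > p^m. *)

lemma (in group) generate_nat_pow:
  fixes n :: nat
  assumes "g \<in> carrier G"
  shows "g [^] n \<in> generate G {g}"
proof -
  have "g [^] n = g [^] int n"
    by (simp add: int_pow_int)
  then show ?thesis
    using generate_pow[OF assms] by blast
qed

lemma (in group) cyclic_group_subgroup_generated_pair:
  assumes g: "g \<in> carrier G" and x: "x \<in> generate G {g}" and y: "y \<in> generate G {g}"
  shows "cyclic_group (subgroup_generated G {x, y})"
proof -
  obtain a :: int where a: "x = g [^] a" using x generate_pow[OF g] by blast
  obtain b :: int where b: "y = g [^] b" using y generate_pow[OF g] by blast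
  obtain u v :: int where uv: "u * a + v * b = gcd a b" using bezout_int by blast
  define z where "z = g [^] gcd a b"
  have xy: "x \<in> carrier G" "y \<in> carrier G" and z: "z \<in> carrier G"
    using a b g z_def by auto
  have "z = x [^] u \<otimes> y [^] v"
    using g by (simp add: z_def a b int_pow_pow int_pow_mult[symmetric] uv[symmetric] mult.commute)
  then have "z \<in> generate G {x, y}"
    using xy generate.incl[of _ "{x, y}" G] generate_is_subgroup[of "{x, y}"]
    by (simp add: subgroup.m_closed subgroup_int_pow_closed)
  then have "generate G {z} \<subseteq> generate G {x, y}"
    using xy z by (intro generate_subgroup_incl) (auto intro: generate_is_subgroup)
  moreover have "x = z [^] (a div gcd a b)" "y = z [^] (b div gcd a b)"
    using g by (simp_all add: z_def a b int_pow_pow)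
  then have "x \<in> generate G {z}" "y \<in> generate G {z}"
    using generate_pow[OF z] by blast+
  then have "generate G {x, y} \<subseteq> generate G {z}"
    using z by (intro generate_subgroup_incl) (auto intro: generate_is_subgroup)
  ultimately have "subgroup_generated G {x, y} = subgroup_generated G {z}"
    using xy z by (simp add: subgroup_generated_def)
  then show ?thesis
    using cyclic_group_generated by simp
qed

lemma (in group) generate_subset_cyclic_partners:
  assumes "g \<in> carrier G" "x \<in> generate G {g}"
  shows "generate G {g} \<subseteq> cyclic_partners G x"
  using assms generate_incl[of "{g}"] cyclic_group_subgroup_generated_pair
  unfolding cyclic_partners_def by auto

lemma (in group) cyclic_partners_of_max_ord:
  assumes fin: "finite (carrier G)" and x: "x \<in> carrier G"
    and max: "\<And>g. g \<in> carrier G \<Longrightarrow> ord g \<le> ord x"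
  shows "cyclic_partners G x = generate G {x}"
proof
  show "generate G {x} \<subseteq> cyclic_partners G x"
    using x by (intro generate_subset_cyclic_partners) (auto intro: generate.incl)
next
  show "cyclic_partners G x \<subseteq> generate G {x}"
  proof
    fix y assume "y \<in> cyclic_partners G x"
    then have y: "y \<in> carrier G" and cyc: "cyclic_group (subgroup_generated G {x, y})"
      unfolding cyclic_partners_def by auto
    let ?H = "subgroup_generated G {x, y}"
    obtain h where h: "h \<in> carrier ?H" "carrier ?H = range (\<lambda>n::int. h [^]\<^bsub>?H\<^esub> n)"
      using group.cyclic_group[OF group_subgroup_generated] cyc by blast
    have hc: "h \<in> carrier G"
      using h(1) carrier_subgroup_generated_subset by blast
    have H: "carrier ?H = generate G {h}"
      using h int_pow_subgroup_generated[OF h(1)] generate_pow[OF hc] by auto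
    have xy: "x \<in> generate G {h}" "y \<in> generate G {h}"
      using x y H by (auto simp: carrier_subgroup_generated intro: generate.incl)
    have sub: "generate G {x} \<subseteq> generate G {h}"
      using xy(1) hc by (intro generate_subgroup_incl) (auto intro: generate_is_subgroup)
    have "finite (generate G {h})"
      using fin generate_incl[of "{h}"] hc finite_subset by blast
    moreover have "card (generate G {h}) \<le> card (generate G {x})"
      using max[OF hc] generate_pow_card[OF hc] generate_pow_card[OF x] by simp
    ultimately have "generate G {x} = generate G {h}"
      using sub by (intro card_subset_eq) (auto dest: card_mono)
    then show "y \<in> generate G {x}"
      using xy(2) by simp
  qed
qed

lemma (in group) group_exponent_eq_ord:
  assumes fin: "finite (carrier G)" and c: "c \<in> carrier G"
    and dvd: "\<And>g. g \<in> carrier G \<Longrightarrow> ord g dvd ord c"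
  shows "group_exponent G = ord c"
  unfolding group_exponent_def
proof (rule Least_equality)
  show "0 < ord c \<and> (\<forall>g\<in>carrier G. g [^] ord c = \<one>)"
    using ord_ge_1[OF fin c] dvd pow_eq_id by auto
next
  fix n :: nat assume "0 < n \<and> (\<forall>g\<in>carrier G. g [^] n = \<one>)"
  then show "ord c \<le> n"
    using c pow_eq_id[OF c] by (auto intro: dvd_imp_le)
qed

lemma (in group) n_cyc_eqI:
  assumes "carrier G \<noteq> {\<one>}"
    and "\<And>x. x \<in> carrier G \<Longrightarrow> x \<noteq> \<one> \<Longrightarrow> card (cyclic_partners G x) = N"
  shows "n_cyc G = N"
proof -
  have "(\<lambda>x. card (cyclic_partners G x)) ` (carrier G - {\<one>}) = {N}"
    using assms by auto
  then show ?thesis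
    unfolding n_cyc_def by simp
qed

lemma (in group) card_cyclic_partners_le_n_cyc:
  assumes "finite (carrier G)" "x \<in> carrier G" "x \<noteq> \<one>"
  shows "card (cyclic_partners G x) \<le> n_cyc G"
  unfolding n_cyc_def using assms by (intro Max_ge) auto

lemma (in group) cyclic_group_n_cyc_eq_group_exponent:
  assumes fin: "finite (carrier G)" and cyc: "cyclic_group G"
    and nontriv: "carrier G \<noteq> {\<one>}"
  shows "n_cyc G = group_exponent G"
proof -
  obtain g where g: "g \<in> carrier G" "subgroup_generated G {g} = G"
    using cyc unfolding cyclic_group_def by blast
  have gen: "generate G {g} = carrier G"
    using g by (metis carrier_subgroup_generated Int_absorb1 empty_subsetI insert_subset)
  then have ord_g: "ord g = order G"
    using generate_pow_card[OF g(1)] by (simp add: order_def)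
  have "n_cyc G = order G"
  proof (rule n_cyc_eqI[OF nontriv])
    fix x assume "x \<in> carrier G"
    then have "cyclic_partners G x = carrier G"
      using generate_subset_cyclic_partners[OF g(1)] gen
      unfolding cyclic_partners_def by auto
    then show "card (cyclic_partners G x) = order G"
      by (simp add: order_def)
  qed
  moreover have "group_exponent G = order G"
    using group_exponent_eq_ord[OF fin g(1)] ord_g ord_dvd_group_order by simp
  ultimately show ?thesis
    by simp
qed

lemma (in group) ord_eq_prime:
  assumes "Factorial_Ring.prime (p::nat)" "x \<in> carrier G" "x \<noteq> \<one>" "x [^] p = \<one>"
  shows "ord x = p"
  using assms pow_eq_id[of x p] ord_eq_1[of x] unfolding prime_nat_iff by auto

lemma (in group) exponent_prime_n_cyc_eq_group_exponent:
  assumes fin: "finite (carrier G)" and p: "Factorial_Ring.prime (p::nat)"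
    and nontriv: "carrier G \<noteq> {\<one>}"
    and exp: "\<And>g. g \<in> carrier G \<Longrightarrow> g [^] p = \<one>"
  shows "n_cyc G = group_exponent G"
proof -
  have ord_le: "ord g \<le> p" if "g \<in> carrier G" for g
    using that p exp pow_eq_id by (auto intro: dvd_imp_le prime_gt_0_nat)
  obtain x where x: "x \<in> carrier G" "x \<noteq> \<one>"
    using nontriv by blast
  have "n_cyc G = p"
  proof (rule n_cyc_eqI[OF nontriv])
    fix y assume y: "y \<in> carrier G" "y \<noteq> \<one>"
    then have "ord y = p"
      using ord_eq_prime[OF p] exp by blast
    then show "card (cyclic_partners G y) = p"
      using cyclic_partners_of_max_ord[OF fin y(1)] ord_le generate_pow_card[OF y(1)] by simp
  qed
  moreover have "group_exponent G = p"
    using group_exponent_eq_ord[OF fin x(1)] ord_eq_prime[OF p x exp[OF x(1)]] exp pow_eq_id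
    by simp
  ultimately show ?thesis
    by simp
qed

lemma (in monoid) ex_outside_pow_inside:
  fixes p n :: nat
  assumes "g \<in> carrier G" "g \<notin> H" "g [^] (p ^ n) \<in> H"
  shows "\<exists>h \<in> carrier G. h \<notin> H \<and> h [^] p \<in> H"
  using assms
proof (induction n arbitrary: g)
  case 0
  then show ?case
    using nat_pow_Suc[of g 0] by (simp del: nat_pow_Suc)
next
  case (Suc n)
  show ?case
  proof (cases "g [^] p \<in> H")
    case True
    then show ?thesis
      using Suc.prems by blast
  next
    case False
    have "(g [^] p) [^] (p ^ n) = g [^] (p ^ Suc n)"
      using Suc.prems by (simp add: nat_pow_pow)
    then show ?thesis
      using Suc.IH[of "g [^] p"] Suc.prems False by simp
  qed
qed

lemma (in comm_group) ex_pow_prime_eq_one_outside_generate: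
  assumes p: "Factorial_Ring.prime (p::nat)" and c: "c \<in> carrier G" "ord c = p ^ m"
    and exp: "\<And>g. g \<in> carrier G \<Longrightarrow> g [^] (p ^ m) = \<one>"
    and g: "g \<in> carrier G" "g \<notin> generate G {c}"
  shows "\<exists>z \<in> carrier G. z \<notin> generate G {c} \<and> z [^] p = \<one>"
proof -
  let ?C = "generate G {c}"
  have C: "subgroup ?C G"
    using c generate_is_subgroup by simp
  have "m \<noteq> 0"
  proof
    assume "m = 0"
    then have "g = \<one>"
      using exp[OF g(1)] g(1) by simp
    then show False
      using g(2) subgroup.one_closed[OF C] by simp
  qed
  then have p_pow_m: "p ^ m = p * p ^ (m - 1)"
    by (simp add: power_eq_if)
  obtain h where h: "h \<in> carrier G" "h \<notin> ?C" "h [^] p \<in> ?C"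
    using ex_outside_pow_inside[OF g, of p m] exp[OF g(1)] subgroup.one_closed[OF C] by auto
  then obtain k :: int where k: "h [^] p = c [^] k"
    using generate_pow[OF c(1)] by auto
  have "c [^] (k * int (p ^ (m - 1))) = (h [^] p) [^] (p ^ (m - 1))"
    using c(1) int_pow_pow[of c k "int (p ^ (m - 1))"] by (simp only: k int_pow_int)
  also have "\<dots> = \<one>"
    using h(1) exp[OF h(1)] by (simp add: nat_pow_pow p_pow_m)
  finally have "int p * int (p ^ (m - 1)) dvd k * int (p ^ (m - 1))"
    using int_pow_eq_id[OF c(1)] c(2) p_pow_m by simp
  then have "int p dvd k"
    using p by (simp add: prime_gt_0_nat)
  then obtain j where j: "k = int p * j" ..
  define z where "z = h \<otimes> inv (c [^] j)"
  have cj: "c [^] j \<in> ?C"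
    using generate_pow[OF c(1)] by blast
  have z: "z \<in> carrier G"
    using z_def h(1) c(1) by simp
  have "z \<notin> ?C"
  proof
    assume "z \<in> ?C"
    moreover have "h = z \<otimes> c [^] j"
      using h(1) c(1) by (simp add: z_def m_assoc)
    ultimately show False
      using h(2) cj subgroup.m_closed[OF C] by metis
  qed
  moreover have "z [^] p = \<one>"
  proof -
    have "(c [^] j) [^] p = c [^] k"
      using c(1) by (simp add: j int_pow_int[symmetric] int_pow_pow mult.commute)
    then have "z [^] p = c [^] k \<otimes> inv (c [^] k)"
      using h(1) c(1) by (simp add: z_def nat_pow_distrib nat_pow_inv k)
    then show ?thesis
      using c(1) by simp
  qed
  ultimately show ?thesis
    using z by blast
qed

lemma (in comm_group) ord_less_card_cyclic_partners:
  fixes p m :: nat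
  assumes fin: "finite (carrier G)" and c: "c \<in> carrier G" and m: "2 \<le> m"
    and z: "z \<in> carrier G" "z \<notin> generate G {c}" "z [^] p = \<one>"
  shows "ord c < card (cyclic_partners G (c [^] p ^ (m - 1)))"
proof -
  let ?C = "generate G {c}" and ?x = "c [^] p ^ (m - 1)"
  have C: "subgroup ?C G"
    using c generate_is_subgroup by simp
  have y: "c \<otimes> z \<in> carrier G"
    using c z(1) by simp
  have "c \<otimes> z \<notin> ?C"
  proof
    assume "c \<otimes> z \<in> ?C"
    then have "inv c \<otimes> (c \<otimes> z) \<in> ?C"
      using C generate.incl[of c "{c}" G] by (simp add: subgroup.m_closed subgroup.m_inv_closed)
    then show False
      using c z by (simp add: m_assoc[symmetric])
  qed
  have "p dvd p ^ (m - 1)"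
    using m by (simp add: dvd_power)
  then have "z [^] p ^ (m - 1) = \<one>"
    using z(3) pow_eq_id[OF z(1)] dvd_trans by blast
  then have "?x = (c \<otimes> z) [^] p ^ (m - 1)"
    using c z(1) by (simp add: nat_pow_distrib)
  then have "?x \<in> generate G {c \<otimes> z}"
    using y by (simp add: generate_nat_pow)
  then have "c \<otimes> z \<in> cyclic_partners G ?x"
    using generate_subset_cyclic_partners[OF y] generate.incl[of _ "{c \<otimes> z}" G] by blast
  moreover have "?C \<subseteq> cyclic_partners G ?x"
    using c by (intro generate_subset_cyclic_partners) (simp_all add: generate_nat_pow)
  moreover have "finite (cyclic_partners G ?x)"
    using fin unfolding cyclic_partners_def by simp
  ultimately have "card (insert (c \<otimes> z) ?C) \<le> card (cyclic_partners G ?x)"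
    by (intro card_mono) auto
  moreover have "card (insert (c \<otimes> z) ?C) = ord c + 1"
    using \<open>c \<otimes> z \<notin> ?C\<close> generate_pow_card[OF c] fin generate_incl[of "{c}"] c
    by (simp add: finite_subset)
  ultimately show ?thesis
    by simp
qed

lemma (in group) p_group_ex_ord_multiple:
  assumes fin: "finite (carrier G)" and p: "Factorial_Ring.prime (p::nat)"
    and order: "order G = p ^ k"
  shows "\<exists>c \<in> carrier G. \<forall>g \<in> carrier G. ord g dvd ord c"
proof -
  have ord_p_power: "\<exists>i. ord g = p ^ i" if "g \<in> carrier G" for g
    using ord_dvd_group_order[OF that] order p by (auto simp: divides_primepow_nat)
  have "Max (ord ` carrier G) \<in> ord ` carrier G"
    using fin by (intro Max_in) auto
  then obtain c where c: "c \<in> carrier G" "ord c = Max (ord ` carrier G)"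
    by auto
  have "ord g dvd ord c" if g: "g \<in> carrier G" for g
  proof -
    obtain i j where ij: "ord g = p ^ i" "ord c = p ^ j"
      using ord_p_power g c(1) by blast
    have "p ^ i \<le> p ^ j"
      using fin g c ij by (metis Max_ge finite_imageI image_eqI)
    then have "i \<le> j"
      using p prime_gt_1_nat power_le_imp_le_exp by blast
    then show ?thesis
      using ij by (simp add: le_imp_power_dvd)
  qed
  then show ?thesis
    using c(1) by blast
qed

lemma (in comm_group) p_group_group_exponent_less_n_cyc:
  assumes fin: "finite (carrier G)" and p: "Factorial_Ring.prime (p::nat)"
    and order: "order G = p ^ k"
    and not_cyclic: "\<not> cyclic_group G"
    and g0: "g0 \<in> carrier G" "g0 [^] p \<noteq> \<one>"
  shows "group_exponent G < n_cyc G"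
proof -
  obtain c where c: "c \<in> carrier G" and dvd: "\<And>g. g \<in> carrier G \<Longrightarrow> ord g dvd ord c"
    using p_group_ex_ord_multiple[OF fin p order] by blast
  obtain m where m: "ord c = p ^ m"
    using ord_dvd_group_order[OF c] order p by (auto simp: divides_primepow_nat)
  have exp: "group_exponent G = p ^ m"
    using group_exponent_eq_ord[OF fin c dvd] m by simp
  have exp_m: "g [^] (p ^ m) = \<one>" if "g \<in> carrier G" for g
    using dvd[OF that] m pow_eq_id[OF that] by simp
  have "2 \<le> m"
  proof (rule ccontr)
    assume "\<not> 2 \<le> m"
    then have "p ^ m dvd p"
      by (cases m) (auto simp: le_Suc_eq)
    then show False
      using g0 dvd[OF g0(1)] m pow_eq_id[OF g0(1)] dvd_trans by metis
  qed
  have "generate G {c} \<noteq> carrier G"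
  proof
    assume "generate G {c} = carrier G"
    then have "subgroup_generated G {c} = G"
      using c unfolding subgroup_generated_def by simp
    then show False
      using not_cyclic c unfolding cyclic_group_def by blast
  qed
  then obtain g where "g \<in> carrier G" "g \<notin> generate G {c}"
    using c generate_incl[of "{c}"] by blast
  then obtain z where "z \<in> carrier G" "z \<notin> generate G {c}" "z [^] p = \<one>"
    using ex_pow_prime_eq_one_outside_generate[OF p c m exp_m] by blast
  then have "p ^ m < card (cyclic_partners G (c [^] p ^ (m - 1)))"
    using ord_less_card_cyclic_partners[OF fin c \<open>2 \<le> m\<close>] m by simp
  also have "\<dots> \<le> n_cyc G"
  proof (rule card_cyclic_partners_le_n_cyc[OF fin])
    show "c [^] p ^ (m - 1) \<noteq> \<one>"
    proof
      assume "c [^] p ^ (m - 1) = \<one>"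
      then have "p ^ m \<le> p ^ (m - 1)"
        using pow_eq_id[OF c] m p by (simp add: dvd_imp_le prime_gt_0_nat)
      then show False
        using p prime_gt_1_nat \<open>2 \<le> m\<close> power_le_imp_le_exp by fastforce
    qed
  qed (use c in simp)
  finally show ?thesis
    using exp by simp
qed

theorem proposition2p5:
  fixes G :: "('a, 'b) monoid_scheme" and p :: nat
  assumes "Factorial_Ring.prime p"
    and "comm_group G"
    and "finite (carrier G)"
    and "\<exists>k. order G = p ^ k"
    and "carrier G \<noteq> {\<one>\<^bsub>G\<^esub>}"
  shows "n_cyc G = group_exponent G \<longleftrightarrow> cyclic_group G \<or> elementary_abelian p G"
proof -
  interpret comm_group G by (rule assms(2))
  obtain k where k: "order G = p ^ k"
    using assms(4) by blast
  show ?thesis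
  proof
    assume "n_cyc G = group_exponent G"
    then show "cyclic_group G \<or> elementary_abelian p G"
      using p_group_group_exponent_less_n_cyc[OF assms(3,1) k] assms(2)
      unfolding elementary_abelian_def by fastforce
  next
    assume "cyclic_group G \<or> elementary_abelian p G"
    then show "n_cyc G = group_exponent G"
      using cyclic_group_n_cyc_eq_group_exponent[OF assms(3) _ assms(5)]
        exponent_prime_n_cyc_eq_group_exponent[OF assms(3,1,5)]
      unfolding elementary_abelian_def by blast
  qed
qed

end
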